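(* Let $F$ be a field, $4\le n<\infty$, and let $\varphi$ be an almost identity PC-map of $\mathrm{UT}(n,F)$. For $u=(u_1,\dots,u_{n-1})\in F^{n-1}$ (a row) put $a_u=\begin{pmatrix}1&u\\0&e_{n-1}\end{pmatrix}=e+\sum_{j=2}^{n}u_{j-1}e_{1j}$. Then there is a function $f:F^{n-1}\to F$ such that $\varphi(a_u)=a_u\,t_{1n}(f(u))$ for all $u$, and $f(u)=0$ whenever $u_1=u_2=0$.
   Context: $\mathrm{UT}(n,F)$ is the group of upper unitriangular $n\times n$ matrices over $F$; $e$ (or $e_m$) is the identity matrix, $e_{ij}$ the matrix unit, $t_{ij}(\alpha)=e+\alpha e_{ij}$ ($i<j$). $[x,y]=xyx^{-1}y^{-1}$. A PC-map is a bijection $\varphi$ of the group with $\varphi([x,y])=[\varphi(x),\varphi(y)]$ for all $x,y$; it is almost identity if $\varphi(t_{ij}(\alpha))=t_{ij}(\alpha)$ for all $i<j$, $\alpha\in F$. *)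

theory Defs
  imports "Jordan_Normal_Form.Matrix"
begin

text \<open>Indices are 0-based: paper's entry (i,j) with 1 \<le> i,j \<le> n is entry (i-1,j-1) here.\<close>

definition UT :: "nat \<Rightarrow> ('a::field) mat set" where
  "UT n = {A \<in> carrier_mat n n. (\<forall>i<n. A $$ (i,i) = 1) \<and> (\<forall>i<n. \<forall>j<i. A $$ (i,j) = 0)}"

definition ut_inv :: "nat \<Rightarrow> ('a::field) mat \<Rightarrow> 'a mat" where
  "ut_inv n A = (THE B. B \<in> carrier_mat n n \<and> A * B = 1\<^sub>m n \<and> B * A = 1\<^sub>m n)"

definition comm :: "nat \<Rightarrow> ('a::field) mat \<Rightarrow> 'a mat \<Rightarrow> 'a mat" where
  "comm n x y = x * y * ut_inv n x * ut_inv n y"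

definition tr :: "nat \<Rightarrow> nat \<Rightarrow> nat \<Rightarrow> ('a::field) \<Rightarrow> 'a mat" where
  "tr n i j \<alpha> = mat n n (\<lambda>(k,l). (if k = l then 1 else 0) + (if k = i \<and> l = j then \<alpha> else 0))"

definition PC_map :: "nat \<Rightarrow> (('a::field) mat \<Rightarrow> 'a mat) \<Rightarrow> bool" where
  "PC_map n \<phi> \<longleftrightarrow> bij_betw \<phi> (UT n) (UT n) \<and>
     (\<forall>x\<in>UT n. \<forall>y\<in>UT n. \<phi> (comm n x y) = comm n (\<phi> x) (\<phi> y))"

definition almost_identity :: "nat \<Rightarrow> (('a::field) mat \<Rightarrow> 'a mat) \<Rightarrow> bool" where
  "almost_identity n \<phi> \<longleftrightarrow> (\<forall>i j \<alpha>. i < j \<and> j < n \<longrightarrow> \<phi> (tr n i j \<alpha>) = tr n i j \<alpha>)"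

text \<open>a_u = e + sum_{j=2}^n u_{j-1} e_{1j}; u is a vector of length n-1 with u$k = u_{k+1}.\<close>
definition a_mat :: "nat \<Rightarrow> ('a::field) vec \<Rightarrow> 'a mat" where
  "a_mat n u = mat n n (\<lambda>(k,l). if k = l then 1 else if k = 0 \<and> 1 \<le> l then u $ (l - 1) else 0)"

end

theory Submission
  imports Defs "Jordan_Normal_Form.Determinant"
begin

text \<open>
  The matrices a_u form an abelian group containing every t_1j, and the centralizer of all
  t_1j in UT(n,F) is exactly this group. Since \<phi> fixes the t_1j and preserves commuting,
  \<phi>(a_u) = a_v for some v. The commutator [a_u, t_jn(1)] is t_1n(u_(j-1)), which \<phi> fixes,
  so v and u differ only in the last coordinate: \<phi>(a_u) = a_u t_1n(f(u)).

  For r, s with vanishing first two coordinates let x be the matrix whose rows 2 and 3 are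
  (0, r) and (0, s). Then [t_12 t_13, x] = a_s a_r = a_(s+r); applying \<phi>, the central factor
  t_1n(f) of \<phi>(t_12 t_13) drops out of the commutator, so \<phi>(a_(s+r)) = \<phi>(a_s) \<phi>(a_r) and f
  is additive on such vectors. As f vanishes on vectors with a single nonzero coordinate
  (their a_u is a transvection fixed by \<phi>), f(u) = 0 whenever u_1 = u_2 = 0.
  The argument only needs n \<ge> 3.
\<close>

lemma tr_carrier_mat [simp]: "tr n i j \<alpha> \<in> carrier_mat n n"
  and dim_row_tr [simp]: "dim_row (tr n i j \<alpha>) = n"
  and dim_col_tr [simp]: "dim_col (tr n i j \<alpha>) = n"
  unfolding tr_def by simp_all

lemma index_tr [simp]:
  "k < n \<Longrightarrow> l < n \<Longrightarrow>
     tr n i j \<alpha> $$ (k, l) = (if k = l then 1 else 0) + (if k = i \<and> l = j then \<alpha> else 0)"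
  unfolding tr_def by simp

lemma a_mat_carrier_mat [simp]: "a_mat n u \<in> carrier_mat n n"
  and dim_row_a_mat [simp]: "dim_row (a_mat n u) = n"
  and dim_col_a_mat [simp]: "dim_col (a_mat n u) = n"
  unfolding a_mat_def by simp_all

lemma index_a_mat [simp]:
  "k < n \<Longrightarrow> l < n \<Longrightarrow>
     a_mat n u $$ (k, l) = (if k = l then 1 else if k = 0 \<and> 1 \<le> l then u $ (l - 1) else 0)"
  unfolding a_mat_def by simp

lemma index_mult_tr_right:
  assumes "A \<in> carrier_mat n n" "i < n" "j < n" "k < n" "l < n"
  shows "(A * tr n i j \<alpha>) $$ (k, l) = A $$ (k, l) + (if l = j then A $$ (k, i) * \<alpha> else 0)"
proof -
  have "(A * tr n i j \<alpha>) $$ (k, l) =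
      (\<Sum>m\<in>{0..<n}. (if m = l then A $$ (k, m) else 0)
        + (if m = i then (if l = j then A $$ (k, m) * \<alpha> else 0) else 0))"
    using assms by (auto simp: scalar_prod_def algebra_simps intro!: sum.cong)
  then show ?thesis
    using assms by (simp add: sum.distrib)
qed

lemma index_mult_tr_left:
  assumes "A \<in> carrier_mat n n" "i < n" "j < n" "k < n" "l < n"
  shows "(tr n i j \<alpha> * A) $$ (k, l) = A $$ (k, l) + (if k = i then \<alpha> * A $$ (j, l) else 0)"
proof -
  have "(tr n i j \<alpha> * A) $$ (k, l) =
      (\<Sum>m\<in>{0..<n}. (if m = k then A $$ (m, l) else 0)
        + (if m = j then (if k = i then \<alpha> * A $$ (m, l) else 0) else 0))"
    using assms by (auto simp: scalar_prod_def algebra_simps intro!: sum.cong)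
  then show ?thesis
    using assms by (simp add: sum.distrib)
qed

lemma index_mult_a_mat_right:
  assumes "A \<in> carrier_mat n n" "k < n" "l < n"
  shows "(A * a_mat n u) $$ (k, l) = A $$ (k, l) + (if 1 \<le> l then A $$ (k, 0) * u $ (l - 1) else 0)"
proof -
  have "(A * a_mat n u) $$ (k, l) =
      (\<Sum>m\<in>{0..<n}. (if m = l then A $$ (k, m) else 0)
        + (if m = 0 then (if 1 \<le> l then A $$ (k, m) * u $ (l - 1) else 0) else 0))"
    using assms by (auto simp: scalar_prod_def algebra_simps intro!: sum.cong)
  then show ?thesis
    using assms by (simp add: sum.distrib)
qed

lemma index_mult_a_mat_left:
  assumes "A \<in> carrier_mat n n" "k < n" "l < n"
  shows "(a_mat n u * A) $$ (k, l) =
    A $$ (k, l) + (if k = 0 then (\<Sum>m\<in>{1..<n}. u $ (m - 1) * A $$ (m, l)) else 0)"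
proof -
  have "(a_mat n u * A) $$ (k, l) =
      (\<Sum>m\<in>{0..<n}. (if m = k then A $$ (m, l) else 0)
        + (if k = 0 \<and> 1 \<le> m then u $ (m - 1) * A $$ (m, l) else 0))"
    using assms by (auto simp: scalar_prod_def algebra_simps intro!: sum.cong)
  moreover have "(\<Sum>m\<in>{0..<n}. if k = 0 \<and> 1 \<le> m then u $ (m - 1) * A $$ (m, l) else 0)
      = (if k = 0 then (\<Sum>m\<in>{1..<n}. u $ (m - 1) * A $$ (m, l)) else 0)"
  proof (cases "k = 0")
    case True
    have "(\<Sum>m\<in>{0..<n}. if 1 \<le> m then u $ (m - 1) * A $$ (m, l) else 0)
        = (\<Sum>m\<in>{0..<n} \<inter> {m. 1 \<le> m}. u $ (m - 1) * A $$ (m, l))"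
      by (subst sum.inter_restrict) auto
    also have "{0..<n} \<inter> {m. 1 \<le> m} = {1..<n}" by auto
    finally show ?thesis using True by simp
  qed simp
  ultimately show ?thesis
    using assms by (simp add: sum.distrib)
qed

lemma UT_carrier_mat: "A \<in> UT n \<Longrightarrow> A \<in> carrier_mat n n"
  unfolding UT_def by auto

lemma one_UT: "1\<^sub>m n \<in> UT n"
  unfolding UT_def by auto

lemma tr_UT: "i < j \<Longrightarrow> j < n \<Longrightarrow> tr n i j \<alpha> \<in> UT n"
  unfolding UT_def by auto

lemma a_mat_UT: "a_mat n u \<in> UT n"
  unfolding UT_def by auto

lemma mult_UT:
  assumes A: "A \<in> UT n" and B: "B \<in> UT n"
  shows "A * B \<in> UT n"
proof -
  have entry: "A $$ (i, k) * B $$ (k, j) = (if k = i \<and> j = i then 1 else 0)"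
    if "j \<le> i" "i < n" "k < n" for i j k
    using A B that unfolding UT_def by (cases k i rule: linorder_cases) auto
  have "(A * B) $$ (i, j) = (if j = i then 1 else 0)" if "j \<le> i" "i < n" for i j
  proof -
    have "(A * B) $$ (i, j) = (\<Sum>k\<in>{0..<n}. A $$ (i, k) * B $$ (k, j))"
      using A B that by (auto simp: UT_def scalar_prod_def)
    also have "\<dots> = (\<Sum>k\<in>{0..<n}. if k = i \<and> j = i then 1 else 0)"
      using entry that by (intro sum.cong) auto
    finally show ?thesis
      using that by (simp add: sum.If_cases)
  qed
  then show ?thesis
    using A B unfolding UT_def by auto
qed

lemma det_UT: assumes "A \<in> UT n" shows "det A = 1"
proof -
  have A: "A \<in> carrier_mat n n" using assms by (rule UT_carrier_mat)
  have "upper_triangular A" using assms A unfolding UT_def upper_triangular_def by auto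
  moreover have "diag_mat A = replicate n 1"
    using assms A unfolding UT_def diag_mat_def by (auto intro: nth_equalityI)
  ultimately show ?thesis using det_upper_triangular[OF _ A] by simp
qed

lemma ut_inv_inverse:
  assumes "A \<in> UT n"
  shows "ut_inv n A \<in> carrier_mat n n" "A * ut_inv n A = 1\<^sub>m n" "ut_inv n A * A = 1\<^sub>m n"
proof -
  have A: "A \<in> carrier_mat n n" using assms by (rule UT_carrier_mat)
  have "A \<in> Units (ring_mat TYPE('a) n ())"
    using det_non_zero_imp_unit[OF A] det_UT[OF assms] by simp
  then obtain B where B: "B \<in> carrier_mat n n" "B * A = 1\<^sub>m n" "A * B = 1\<^sub>m n"
    unfolding Units_def ring_mat_def by auto
  have "B' = B" if "B' \<in> carrier_mat n n" "A * B' = 1\<^sub>m n" "B' * A = 1\<^sub>m n" for B'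
  proof -
    have "B' = B' * (A * B)" using B that by simp
    also have "\<dots> = (B' * A) * B" by (rule assoc_mult_mat[OF that(1) A B(1), symmetric])
    also have "\<dots> = B" using B that by simp
    finally show ?thesis .
  qed
  then have "\<exists>!B. B \<in> carrier_mat n n \<and> A * B = 1\<^sub>m n \<and> B * A = 1\<^sub>m n"
    using B by blast
  from theI'[OF this] show "ut_inv n A \<in> carrier_mat n n"
    and "A * ut_inv n A = 1\<^sub>m n" and "ut_inv n A * A = 1\<^sub>m n"
    unfolding ut_inv_def by auto
qed

lemma comm_eq_iff:
  assumes x: "x \<in> UT n" and y: "y \<in> UT n" and z: "z \<in> carrier_mat n n"
  shows "comm n x y = z \<longleftrightarrow> x * y = z * y * x"
proof -
  have xc: "x \<in> carrier_mat n n" and yc: "y \<in> carrier_mat n n"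
    using x y by (simp_all add: UT_carrier_mat)
  define X where "X = ut_inv n x"
  define Y where "Y = ut_inv n y"
  have X: "X \<in> carrier_mat n n" "x * X = 1\<^sub>m n" "X * x = 1\<^sub>m n"
    using ut_inv_inverse[OF x] unfolding X_def by auto
  have Y: "Y \<in> carrier_mat n n" "y * Y = 1\<^sub>m n" "Y * y = 1\<^sub>m n"
    using ut_inv_inverse[OF y] unfolding Y_def by auto
  have c: "comm n x y = x * y * X * Y"
    unfolding comm_def X_def Y_def ..
  show ?thesis
  proof
    assume "comm n x y = z"
    then have "z * y * x = x * y * X * Y * y * x"
      using c by simp
    also have "\<dots> = x * y * (X * x)"
      using xc yc X Y by (simp add: assoc_mult_mat[of _ n n _ n _ n])
    finally show "x * y = z * y * x"
      using xc yc X by simp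
  next
    assume "x * y = z * y * x"
    then have "comm n x y = z * y * x * X * Y"
      using c by simp
    also have "\<dots> = z * (y * Y)"
      using xc yc X Y z by (simp add: assoc_mult_mat[of _ n n _ n _ n])
    finally show "comm n x y = z"
      using z Y by simp
  qed
qed

lemma comm_carrier_mat: "x \<in> UT n \<Longrightarrow> y \<in> UT n \<Longrightarrow> comm n x y \<in> carrier_mat n n"
  unfolding comm_def using ut_inv_inverse(1) UT_carrier_mat by (metis mult_carrier_mat)

lemma comm_eq_one_iff:
  assumes "x \<in> UT n" "y \<in> UT n"
  shows "comm n x y = 1\<^sub>m n \<longleftrightarrow> x * y = y * x"
  using comm_eq_iff[OF assms one_carrier_mat] UT_carrier_mat[OF assms(2)] by simp

lemma comm_mult_left:
  assumes a: "a \<in> UT n" and b: "b \<in> UT n" and y: "y \<in> UT n"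
    and commute: "a * comm n b y = comm n b y * a"
  shows "comm n (a * b) y = comm n b y * comm n a y"
proof -
  define P where "P = comm n a y"
  define Q where "Q = comm n b y"
  have c: "a \<in> carrier_mat n n" "b \<in> carrier_mat n n" "y \<in> carrier_mat n n"
    "P \<in> carrier_mat n n" "Q \<in> carrier_mat n n"
    using a b y by (auto simp: UT_carrier_mat comm_carrier_mat P_def Q_def)
  have a_y: "a * y = P * y * a" and b_y: "b * y = Q * y * b"
    using comm_eq_iff[OF a y c(4)] comm_eq_iff[OF b y c(5)] by (simp_all add: P_def Q_def)
  have "a * b * y = a * (Q * y * b)"
    using c by (simp add: b_y[symmetric] assoc_mult_mat[of _ n n _ n _ n])
  also have "\<dots> = (a * Q) * y * b"
    using c by (simp add: assoc_mult_mat[of _ n n _ n _ n])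
  also have "\<dots> = Q * (a * y) * b"
    using c commute by (simp add: Q_def[symmetric] assoc_mult_mat[of _ n n _ n _ n])
  also have "\<dots> = Q * P * y * (a * b)"
    using c by (simp add: a_y assoc_mult_mat[of _ n n _ n _ n])
  finally show ?thesis
    using comm_eq_iff[OF mult_UT[OF a b] y] c by (simp add: P_def Q_def)
qed

lemma comm_mult_central_left:
  assumes "a \<in> UT n" "c \<in> UT n" "y \<in> UT n" "c * y = y * c"
  shows "comm n (a * c) y = comm n a y"
  using comm_mult_left[OF assms(1-3)] assms comm_eq_one_iff[of c n y]
    UT_carrier_mat[OF assms(1)] comm_carrier_mat[OF assms(1,3)] by simp

lemma a_mat_mult:
  assumes "u \<in> carrier_vec (n - 1)" "v \<in> carrier_vec (n - 1)"
  shows "a_mat n u * a_mat n v = a_mat n (u + v)"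
proof (rule eq_matI)
  fix k l assume "k < dim_row (a_mat n (u + v))" "l < dim_col (a_mat n (u + v))"
  then show "(a_mat n u * a_mat n v) $$ (k, l) = a_mat n (u + v) $$ (k, l)"
    using assms by (auto simp: index_mult_a_mat_right simp del: index_mult_mat)
qed auto

lemma a_mat_commute:
  assumes "u \<in> carrier_vec (n - 1)" "v \<in> carrier_vec (n - 1)"
  shows "a_mat n u * a_mat n v = a_mat n v * a_mat n u"
  using assms by (simp add: a_mat_mult comm_add_vec)

lemma tr_first_row_eq_a_mat:
  assumes "1 \<le> j" "j < n"
  shows "tr n 0 j \<alpha> = a_mat n (\<alpha> \<cdot>\<^sub>v unit_vec (n - 1) (j - 1))"
  by (rule eq_matI) (use assms in auto)

lemma index_a_mat_corner: "2 \<le> n \<Longrightarrow> a_mat n u $$ (0, n - 1) = u $ (n - 2)"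
  by (simp add: numeral_2_eq_2 Suc_diff_Suc)

lemma tr_corner_commute:
  assumes y: "y \<in> UT n" and n: "1 < n"
  shows "tr n 0 (n - 1) c * y = y * tr n 0 (n - 1) c"
proof (rule eq_matI)
  have yc: "y \<in> carrier_mat n n" using y by (rule UT_carrier_mat)
  fix k l assume "k < dim_row (y * tr n 0 (n - 1) c)" "l < dim_col (y * tr n 0 (n - 1) c)"
  then have k: "k < n" and l: "l < n" using yc by auto
  have "y $$ (n - 1, l) = (if l = n - 1 then 1 else 0)" "y $$ (k, 0) = (if k = 0 then 1 else 0)"
    "y $$ (n - 1, n - 1) = 1"
    using y k l n unfolding UT_def by auto
  then show "(tr n 0 (n - 1) c * y) $$ (k, l) = (y * tr n 0 (n - 1) c) $$ (k, l)"
    using k l n by (simp add: index_mult_tr_left[OF yc] index_mult_tr_right[OF yc] del: index_mult_mat)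
qed (use y in \<open>auto simp: UT_def\<close>)

lemma commute_first_row_tr_imp_a_mat:
  assumes y: "y \<in> UT n" and commute: "\<And>j. 1 \<le> j \<Longrightarrow> j < n \<Longrightarrow> y * tr n 0 j 1 = tr n 0 j 1 * y"
  shows "y = a_mat n (vec (n - 1) (\<lambda>k. y $$ (0, k + 1)))"
proof (rule eq_matI)
  have yc: "y \<in> carrier_mat n n" using y by (rule UT_carrier_mat)
  have diag: "\<And>i. i < n \<Longrightarrow> y $$ (i, i) = 1"
    using y unfolding UT_def by auto
  have row: "y $$ (k, l) = (if k = l then 1 else 0)" if "1 \<le> k" "k < n" "l < n" for k l
  proof -
    have "(y * tr n 0 k 1) $$ (0, l) = (tr n 0 k 1 * y) $$ (0, l)"
      using commute that by simp
    then have "y $$ (0, l) + (if l = k then y $$ (0, 0) * 1 else 0) = y $$ (0, l) + 1 * y $$ (k, l)"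
      using that by (simp add: index_mult_tr_right[OF yc] index_mult_tr_left[OF yc] del: index_mult_mat)
    moreover have "y $$ (0, 0) = 1" "y $$ (k, k) = 1" using diag that by auto
    ultimately show ?thesis by (auto split: if_splits)
  qed
  fix k l assume "k < dim_row (a_mat n (vec (n - 1) (\<lambda>k. y $$ (0, k + 1))))"
    "l < dim_col (a_mat n (vec (n - 1) (\<lambda>k. y $$ (0, k + 1))))"
  then have k: "k < n" and l: "l < n" by auto
  show "y $$ (k, l) = a_mat n (vec (n - 1) (\<lambda>k. y $$ (0, k + 1))) $$ (k, l)"
    using k l diag[of 0] row[of k l] by (cases "k = 0"; cases "l = 0") auto
qed (use y in \<open>auto simp: UT_def\<close>)

lemma comm_a_mat_tr:
  assumes u: "u \<in> carrier_vec (n - 1)" and j: "1 \<le> j" "j < n - 1"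
  shows "comm n (a_mat n u) (tr n j (n - 1) 1) = tr n 0 (n - 1) (u $ (j - 1))"
proof -
  let ?t = "tr n j (n - 1) 1" and ?c = "tr n 0 (n - 1) (u $ (j - 1))"
  have tA: "?t * a_mat n u \<in> carrier_mat n n" by (rule mult_carrier_mat) auto
  have "a_mat n u * ?t = ?c * (?t * a_mat n u)"
  proof (rule eq_matI)
    fix k l assume "k < dim_row (?c * (?t * a_mat n u))" "l < dim_col (?c * (?t * a_mat n u))"
    then have k: "k < n" and l: "l < n" by auto
    have left: "(a_mat n u * ?t) $$ (k, l) =
        a_mat n u $$ (k, l) + (if l = n - 1 then a_mat n u $$ (k, j) else 0)"
      using k l j by (subst index_mult_tr_right) auto
    have inner: "(?t * a_mat n u) $$ (k', l) =
        a_mat n u $$ (k', l) + (if k' = j then a_mat n u $$ (n - 1, l) else 0)"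
      if "k' < n" for k'
      using that l j by (subst index_mult_tr_left) auto
    have right: "(?c * (?t * a_mat n u)) $$ (k, l) =
        (?t * a_mat n u) $$ (k, l)
        + (if k = 0 then u $ (j - 1) * (?t * a_mat n u) $$ (n - 1, l) else 0)"
      using k l j by (subst index_mult_tr_left[OF tA]) auto
    have last: "n - 1 < n" using j by auto
    show "(a_mat n u * ?t) $$ (k, l) = (?c * (?t * a_mat n u)) $$ (k, l)"
      unfolding left right inner[OF k] inner[OF last] using k l j by auto
  qed auto
  then have "a_mat n u * ?t = ?c * ?t * a_mat n u"
    by (simp add: assoc_mult_mat[of _ n n _ n _ n])
  then show ?thesis
    using j by (subst comm_eq_iff) (auto intro: a_mat_UT tr_UT)
qed

lemma PC_map_UT: "PC_map n \<phi> \<Longrightarrow> x \<in> UT n \<Longrightarrow> \<phi> x \<in> UT n"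
  unfolding PC_map_def using bij_betw_apply by metis

lemma PC_map_comm:
  "PC_map n \<phi> \<Longrightarrow> x \<in> UT n \<Longrightarrow> y \<in> UT n \<Longrightarrow> \<phi> (comm n x y) = comm n (\<phi> x) (\<phi> y)"
  unfolding PC_map_def by simp

lemma PC_map_one:
  assumes "PC_map n \<phi>"
  shows "\<phi> (1\<^sub>m n) = 1\<^sub>m n"
proof -
  have comm_self: "comm n x x = 1\<^sub>m n" if "x \<in> UT n" for x :: "'a mat"
    using comm_eq_one_iff[OF that that] by simp
  have "\<phi> (1\<^sub>m n) = \<phi> (comm n (1\<^sub>m n) (1\<^sub>m n))"
    using comm_self[OF one_UT] by simp
  also have "\<dots> = 1\<^sub>m n"
    using PC_map_comm[OF assms one_UT one_UT] comm_self[OF PC_map_UT[OF assms one_UT]] by simp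
  finally show ?thesis .
qed

lemma PC_map_commute:
  assumes P: "PC_map n \<phi>" and x: "x \<in> UT n" and y: "y \<in> UT n" and xy: "x * y = y * x"
  shows "\<phi> x * \<phi> y = \<phi> y * \<phi> x"
  using comm_eq_one_iff[OF x y] comm_eq_one_iff[OF PC_map_UT[OF P x] PC_map_UT[OF P y]]
    PC_map_comm[OF P x y] PC_map_one[OF P] xy by simp

lemma almost_identity_tr:
  "almost_identity n \<phi> \<Longrightarrow> i < j \<Longrightarrow> j < n \<Longrightarrow> \<phi> (tr n i j \<alpha>) = tr n i j \<alpha>"
  unfolding almost_identity_def by blast

lemma PC_image_a_mat:
  assumes P: "PC_map n \<phi>" and AI: "almost_identity n \<phi>" and u: "u \<in> carrier_vec (n - 1)"
  shows "\<exists>v \<in> carrier_vec (n - 1). \<phi> (a_mat n u) = a_mat n v \<and> (\<forall>k < n - 2. v $ k = u $ k)"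
proof -
  let ?y = "\<phi> (a_mat n u)"
  let ?v = "vec (n - 1) (\<lambda>k. ?y $$ (0, k + 1))"
  have y_v: "?y = a_mat n ?v"
  proof (rule commute_first_row_tr_imp_a_mat)
    show "?y \<in> UT n" by (rule PC_map_UT[OF P a_mat_UT])
    fix j assume j: "1 \<le> j" "j < n"
    have "a_mat n u * tr n 0 j 1 = tr n 0 j 1 * a_mat n u"
      using j a_mat_commute[OF u] by (simp add: tr_first_row_eq_a_mat)
    from PC_map_commute[OF P a_mat_UT tr_UT this] j
    show "?y * tr n 0 j 1 = tr n 0 j 1 * ?y"
      using almost_identity_tr[OF AI, of 0 j] by simp
  qed
  have "?v $ k = u $ k" if k: "k < n - 2" for k
  proof -
    have j: "1 \<le> k + 1" "k + 1 < n - 1" using k by auto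
    have "tr n 0 (n - 1) (u $ k) = \<phi> (comm n (a_mat n u) (tr n (k + 1) (n - 1) 1))"
      using comm_a_mat_tr[OF u j] almost_identity_tr[OF AI] j by simp
    also have "\<dots> = comm n (a_mat n ?v) (tr n (k + 1) (n - 1) 1)"
      using PC_map_comm[OF P a_mat_UT tr_UT] almost_identity_tr[OF AI] y_v j by simp
    also have "\<dots> = tr n 0 (n - 1) (?v $ k)"
      using comm_a_mat_tr[OF vec_carrier j] j by simp
    finally have "tr n 0 (n - 1) (u $ k) $$ (0, n - 1) = tr n 0 (n - 1) (?v $ k) $$ (0, n - 1)"
      by simp
    then show ?thesis using k by simp
  qed
  then show ?thesis using y_v by auto
qed

lemma a_mat_eq_mult_tr_corner:
  assumes n: "2 \<le> n" and u: "u \<in> carrier_vec (n - 1)" and v: "v \<in> carrier_vec (n - 1)"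
    and same: "\<forall>k < n - 2. v $ k = u $ k"
  shows "a_mat n v = a_mat n u * tr n 0 (n - 1) (v $ (n - 2) - u $ (n - 2))"
proof (rule eq_matI)
  fix k l assume "k < dim_row (a_mat n u * tr n 0 (n - 1) (v $ (n - 2) - u $ (n - 2)))"
    "l < dim_col (a_mat n u * tr n 0 (n - 1) (v $ (n - 2) - u $ (n - 2)))"
  then have k: "k < n" and l: "l < n" by auto
  have "v $ (l - 1) = u $ (l - 1)" if "l < n - 1" "1 \<le> l"
    using same that by auto
  moreover have "n - 1 - 1 = n - 2" by simp
  ultimately show
    "a_mat n v $$ (k, l) = (a_mat n u * tr n 0 (n - 1) (v $ (n - 2) - u $ (n - 2))) $$ (k, l)"
    using k l n by (cases "l = n - 1") (auto simp: index_mult_tr_right simp del: index_mult_mat)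
qed auto

definition corner_defect :: "nat \<Rightarrow> ('a::field mat \<Rightarrow> 'a mat) \<Rightarrow> 'a vec \<Rightarrow> 'a" where
  "corner_defect n \<phi> u = \<phi> (a_mat n u) $$ (0, n - 1) - u $ (n - 2)"

lemma PC_a_mat_eq:
  assumes n: "2 \<le> n" and P: "PC_map n \<phi>" and AI: "almost_identity n \<phi>"
    and u: "u \<in> carrier_vec (n - 1)"
  shows "\<phi> (a_mat n u) = a_mat n u * tr n 0 (n - 1) (corner_defect n \<phi> u)"
proof -
  obtain v where v: "v \<in> carrier_vec (n - 1)" "\<phi> (a_mat n u) = a_mat n v"
    "\<forall>k < n - 2. v $ k = u $ k"
    using PC_image_a_mat[OF P AI u] by blast
  have "corner_defect n \<phi> u = v $ (n - 2) - u $ (n - 2)"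
    unfolding corner_defect_def v(2) index_a_mat_corner[OF n] ..
  then show ?thesis
    using a_mat_eq_mult_tr_corner[OF n u v(1,3)] v(2) by simp
qed

definition two_rows_mat :: "nat \<Rightarrow> ('a::field) vec \<Rightarrow> 'a vec \<Rightarrow> 'a mat" where
  "two_rows_mat n r s = mat n n (\<lambda>(k, l). if k = l then 1
      else if k = 1 \<and> 1 \<le> l then r $ (l - 1) else if k = 2 \<and> 1 \<le> l then s $ (l - 1) else 0)"

lemma two_rows_mat_carrier_mat [simp]: "two_rows_mat n r s \<in> carrier_mat n n"
  and dim_row_two_rows_mat [simp]: "dim_row (two_rows_mat n r s) = n"
  and dim_col_two_rows_mat [simp]: "dim_col (two_rows_mat n r s) = n"
  unfolding two_rows_mat_def by simp_all

lemma index_two_rows_mat [simp]: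
  "k < n \<Longrightarrow> l < n \<Longrightarrow> two_rows_mat n r s $$ (k, l) = (if k = l then 1
      else if k = 1 \<and> 1 \<le> l then r $ (l - 1) else if k = 2 \<and> 1 \<le> l then s $ (l - 1) else 0)"
  unfolding two_rows_mat_def by simp

lemma two_rows_mat_UT: "s $ 0 = 0 \<Longrightarrow> two_rows_mat n r s \<in> UT n"
  unfolding UT_def by auto

lemma tr_mult_two_rows_mat:
  assumes n: "3 \<le> n" and zeros: "r $ 0 = 0" "r $ 1 = 0" "s $ 0 = 0" "s $ 1 = 0"
    and jw: "(j = 1 \<and> w = r) \<or> (j = 2 \<and> w = s)"
  shows "tr n 0 j 1 * two_rows_mat n r s = a_mat n w * two_rows_mat n r s * tr n 0 j 1"
proof -
  let ?x = "two_rows_mat n r s"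
  have w: "w $ 0 = 0" "w $ 1 = 0" and j: "1 \<le> j" "j < n"
    using jw zeros n by auto
  have xt: "?x * tr n 0 j 1 \<in> carrier_mat n n" by (rule mult_carrier_mat) auto
  have "tr n 0 j 1 * ?x = a_mat n w * (?x * tr n 0 j 1)"
  proof (rule eq_matI)
    fix k l assume "k < dim_row (a_mat n w * (?x * tr n 0 j 1))"
      "l < dim_col (a_mat n w * (?x * tr n 0 j 1))"
    then have k: "k < n" and l: "l < n" by auto
    have xt_entry: "(?x * tr n 0 j 1) $$ (m, l) = ?x $$ (m, l) + (if l = j then ?x $$ (m, 0) else 0)"
      if "m < n" for m
      using that l j by (subst index_mult_tr_right) auto
    have "(\<Sum>m\<in>{1..<n}. w $ (m - 1) * (?x * tr n 0 j 1) $$ (m, l))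
        = (\<Sum>m\<in>{1..<n}. if m = l then w $ (l - 1) else 0)"
    proof (rule sum.cong)
      fix m assume "m \<in> {1..<n}"
      then show "w $ (m - 1) * (?x * tr n 0 j 1) $$ (m, l) = (if m = l then w $ (l - 1) else 0)"
        using l w by (cases "m = 1"; cases "m = 2") (auto simp: xt_entry simp del: index_mult_mat)
    qed simp
    also have "\<dots> = (if 1 \<le> l then w $ (l - 1) else 0)"
      using l by simp
    finally have row: "(\<Sum>m\<in>{1..<n}. w $ (m - 1) * (?x * tr n 0 j 1) $$ (m, l))
        = (if 1 \<le> l then w $ (l - 1) else 0)" .
    have left: "(tr n 0 j 1 * ?x) $$ (k, l) = ?x $$ (k, l) + (if k = 0 then ?x $$ (j, l) else 0)"
      using k l j by (subst index_mult_tr_left) auto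
    have right: "(a_mat n w * (?x * tr n 0 j 1)) $$ (k, l) = (?x * tr n 0 j 1) $$ (k, l)
        + (if k = 0 then (\<Sum>m\<in>{1..<n}. w $ (m - 1) * (?x * tr n 0 j 1) $$ (m, l)) else 0)"
      using k l by (subst index_mult_a_mat_left[OF xt]) auto
    show "(tr n 0 j 1 * ?x) $$ (k, l) = (a_mat n w * (?x * tr n 0 j 1)) $$ (k, l)"
      unfolding left right row xt_entry[OF k] using k l j jw zeros
      by (cases "k = 0"; cases "l = 0"; cases "l = j") auto
  qed auto
  then show ?thesis
    by (simp add: assoc_mult_mat[of _ n n _ n _ n])
qed

lemma comm_tr_two_rows_mat:
  assumes n: "3 \<le> n" and zeros: "r $ 0 = 0" "r $ 1 = 0" "s $ 0 = 0" "s $ 1 = 0"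
  shows "comm n (tr n 0 1 1) (two_rows_mat n r s) = a_mat n r"
    and "comm n (tr n 0 2 1) (two_rows_mat n r s) = a_mat n s"
  using n tr_mult_two_rows_mat[OF n zeros] two_rows_mat_UT[OF zeros(3)]
  by (subst comm_eq_iff; auto intro: tr_UT)+

lemma PC_a_mat_mult:
  assumes n: "3 \<le> n" and P: "PC_map n \<phi>" and AI: "almost_identity n \<phi>"
    and r: "r \<in> carrier_vec (n - 1)" and s: "s \<in> carrier_vec (n - 1)"
    and zeros: "r $ 0 = 0" "r $ 1 = 0" "s $ 0 = 0" "s $ 1 = 0"
  shows "\<phi> (a_mat n (s + r)) = \<phi> (a_mat n s) * \<phi> (a_mat n r)"
proof -
  let ?x = "two_rows_mat n r s" and ?t1 = "tr n 0 1 (1::'a)" and ?t2 = "tr n 0 2 (1::'a)"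
  let ?e1 = "1 \<cdot>\<^sub>v unit_vec (n - 1) 0 :: 'a vec" and ?e2 = "1 \<cdot>\<^sub>v unit_vec (n - 1) 1 :: 'a vec"
  have xU: "?x \<in> UT n" using two_rows_mat_UT[OF zeros(3)] .
  have yU: "\<phi> ?x \<in> UT n" using PC_map_UT[OF P xU] .
  have tU: "?t1 \<in> UT n" "?t2 \<in> UT n" using n by (auto intro: tr_UT)
  have t_a: "?t1 = a_mat n ?e1" "?t2 = a_mat n ?e2"
    using n tr_first_row_eq_a_mat[of 1 n] tr_first_row_eq_a_mat[of 2 n] by auto
  define w where "w = ?e1 + ?e2"
  have w: "w \<in> carrier_vec (n - 1)" "?t1 * ?t2 = a_mat n w"
    unfolding w_def t_a by (auto simp: a_mat_mult)
  obtain p where p: "p \<in> carrier_vec (n - 1)" "\<phi> (a_mat n s) = a_mat n p"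
    using PC_image_a_mat[OF P AI s] by blast
  have comm_x: "comm n ?t1 ?x = a_mat n r" "comm n ?t2 ?x = a_mat n s"
    using comm_tr_two_rows_mat[OF n zeros] .
  have comm_y: "comm n ?t1 (\<phi> ?x) = \<phi> (a_mat n r)" "comm n ?t2 (\<phi> ?x) = \<phi> (a_mat n s)"
    using PC_map_comm[OF P tU(1) xU] PC_map_comm[OF P tU(2) xU] comm_x
      almost_identity_tr[OF AI, of 0 1 1] almost_identity_tr[OF AI, of 0 2 1] n by auto
  have "a_mat n (s + r) = comm n (?t1 * ?t2) ?x"
    using comm_mult_left[OF tU xU] comm_x a_mat_commute[OF _ s] a_mat_mult[OF s r] t_a(1) by simp
  then have "\<phi> (a_mat n (s + r)) = comm n (\<phi> (a_mat n w)) (\<phi> ?x)"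
    using PC_map_comm[OF P a_mat_UT xU] w(2) by simp
  also have "\<dots> = comm n (a_mat n w) (\<phi> ?x)"
    using PC_a_mat_eq[OF _ P AI w(1)] n
      comm_mult_central_left[OF a_mat_UT tr_UT yU tr_corner_commute[OF yU]]
    by simp
  also have "\<dots> = \<phi> (a_mat n s) * \<phi> (a_mat n r)"
    using comm_mult_left[OF tU yU] comm_y a_mat_commute[OF _ p(1)] p(2) t_a(1) w(2) by simp
  finally show ?thesis .
qed

lemma corner_defect_add:
  assumes n: "3 \<le> n" and P: "PC_map n \<phi>" and AI: "almost_identity n \<phi>"
    and r: "r \<in> carrier_vec (n - 1)" and s: "s \<in> carrier_vec (n - 1)"
    and zeros: "r $ 0 = 0" "r $ 1 = 0" "s $ 0 = 0" "s $ 1 = 0"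
  shows "corner_defect n \<phi> (s + r) = corner_defect n \<phi> s + corner_defect n \<phi> r"
proof -
  obtain p where p: "p \<in> carrier_vec (n - 1)" "\<phi> (a_mat n s) = a_mat n p"
    using PC_image_a_mat[OF P AI s] by blast
  obtain q where q: "q \<in> carrier_vec (n - 1)" "\<phi> (a_mat n r) = a_mat n q"
    using PC_image_a_mat[OF P AI r] by blast
  have sum: "\<phi> (a_mat n (s + r)) = a_mat n (p + q)"
    using PC_a_mat_mult[OF assms] p q a_mat_mult by simp
  have n2: "2 \<le> n" using n by simp
  have defects: "corner_defect n \<phi> (s + r) = (p + q) $ (n - 2) - (s + r) $ (n - 2)"
    "corner_defect n \<phi> s = p $ (n - 2) - s $ (n - 2)"
    "corner_defect n \<phi> r = q $ (n - 2) - r $ (n - 2)"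
    unfolding corner_defect_def sum p(2) q(2) index_a_mat_corner[OF n2] by (rule refl)+
  show ?thesis
    unfolding defects using n p q r s by (simp add: algebra_simps)
qed

lemma corner_defect_eq_0:
  assumes n: "3 \<le> n" and P: "PC_map n \<phi>" and AI: "almost_identity n \<phi>"
    and u: "u \<in> carrier_vec (n - 1)" and zeros: "u $ 0 = 0" "u $ 1 = 0"
  shows "corner_defect n \<phi> u = 0"
proof -
  have n2: "2 \<le> n" using n by simp
  have fixed: "corner_defect n \<phi> v = 0" if "\<phi> (a_mat n v) = a_mat n v" for v
    unfolding corner_defect_def that index_a_mat_corner[OF n2] by simp
  have "corner_defect n \<phi> u = 0"
    if "u \<in> carrier_vec (n - 1)" "u $ 0 = 0" "u $ 1 = 0" "\<forall>k \<in> {m..<n - 1}. u $ k = 0" for m u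
    using that
  proof (induction m arbitrary: u)
    case 0
    then have "a_mat n u = 1\<^sub>m n" by (intro eq_matI) auto
    then show ?case
      by (intro fixed) (simp add: PC_map_one[OF P])
  next
    case (Suc m)
    show ?case
    proof (cases "u $ m = 0 \<or> n - 1 \<le> m")
      case True
      then have "\<forall>k \<in> {m..<n - 1}. u $ k = 0"
        using Suc.prems(4) by (force simp: le_less)
      then show ?thesis using Suc.IH Suc.prems(1-3) by blast
    next
      case False
      then have "m \<noteq> 0" "m \<noteq> 1" using Suc.prems(2,3) by fastforce+
      then have m: "2 \<le> m" "m < n - 1" using False by auto
      define s where "s = u $ m \<cdot>\<^sub>v unit_vec (n - 1) m"
      define r where "r = vec (n - 1) (\<lambda>k. if k = m then 0 else u $ k)"
      have s: "s \<in> carrier_vec (n - 1)" and r: "r \<in> carrier_vec (n - 1)"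
        unfolding s_def r_def by simp_all
      have u_sr: "u = s + r"
        using Suc.prems(1) by (intro eq_vecI) (auto simp: s_def r_def unit_vec_def)
      have zeros_sr: "r $ 0 = 0" "r $ 1 = 0" "s $ 0 = 0" "s $ 1 = 0"
        using m Suc.prems(2,3) by (auto simp: s_def r_def)
      have "a_mat n s = tr n 0 (m + 1) (u $ m)"
        using tr_first_row_eq_a_mat[of "m + 1" n "u $ m"] m by (simp add: s_def)
      then have "\<phi> (a_mat n s) = a_mat n s"
        using almost_identity_tr[OF AI, of 0 "m + 1"] m by simp
      then have "corner_defect n \<phi> s = 0" by (rule fixed)
      moreover have "corner_defect n \<phi> r = 0"
        using Suc.prems(4) r zeros_sr by (intro Suc.IH) (auto simp: r_def)
      ultimately show ?thesis
        using corner_defect_add[OF n P AI r s zeros_sr] u_sr by simp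
    qed
  qed
  from this[of u "n - 1"] show ?thesis using u zeros by simp
qed

theorem mainTheorem10:
  fixes \<phi> :: "('a::field) mat \<Rightarrow> 'a mat" and n :: nat
  assumes "4 \<le> n"
    and "PC_map n \<phi>"
    and "almost_identity n \<phi>"
  shows "\<exists>f :: 'a vec \<Rightarrow> 'a. \<forall>u \<in> carrier_vec (n - 1).
           \<phi> (a_mat n u) = a_mat n u * tr n 0 (n - 1) (f u) \<and>
           (u $ 0 = 0 \<and> u $ 1 = 0 \<longrightarrow> f u = 0)"
proof (intro exI[of _ "corner_defect n \<phi>"] ballI conjI impI)
  fix u :: "'a vec" assume u: "u \<in> carrier_vec (n - 1)"
  have n: "2 \<le> n" "3 \<le> n" using assms(1) by simp_all
  show "\<phi> (a_mat n u) = a_mat n u * tr n 0 (n - 1) (corner_defect n \<phi> u)"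
    using PC_a_mat_eq[OF n(1) assms(2,3) u] .
  assume "u $ 0 = 0 \<and> u $ 1 = 0"
  then show "corner_defect n \<phi> u = 0"
    using corner_defect_eq_0[OF n(2) assms(2,3) u] by simp
qed

end
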